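(* Let $p$ be an odd prime, $r,m$ positive integers and $s\in\{0,1,\dots,mp^{r-1}-1\}$. Then $$\binom{mp^r}{sp}\binom{2sp}{sp}\binom{2mp^r-2sp}{mp^r-sp}\equiv\binom{mp^{r-1}}{s}\binom{2s}{s}\binom{2mp^{r-1}-2s}{mp^{r-1}-s}\pmod{p^{2r}}.$$ *)

theory Defs
  imports "HOL-Number_Theory.Number_Theory"
begin

end

theory Submission
  imports Defs
begin

(* Write W(M) for the product of the k \<le> M not divisible by p, so that
   M! = p^(M div p) (M div p)! W(M). With a = s and b = m p^(r-1) - s, the powers of p and the
   factorials (M div p)! turn the left-hand side into the right-hand side exactly, up to the factor
   W(ap)^3 W(bp)^3 / (W((a+b)p) W(2ap) W(2bp)). If p^t divides a and b, pairing k with q - k shows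
   W(c q) = W(q)^c mod q^2 for q = p^(t+1), so this factor is 1 mod p^(2t+2). Taking t = v_p(a)
   (capped at r - 1), a carry count in base p shows that the right-hand side is divisible by
   p^(2(r-1-t)), which supplies the missing precision. *)

definition nondvd_prod :: "nat \<Rightarrow> nat \<Rightarrow> nat" where
  "nondvd_prod p M = (\<Prod>k\<in>{k\<in>{1..M}. \<not> p dvd k}. k)"

lemma fact_eq_nondvd_prod:
  fixes p M :: nat
  assumes "p > 0"
  shows "fact M = p ^ (M div p) * fact (M div p) * nondvd_prod p M"
proof -
  have multiples: "{k\<in>{1..M}. p dvd k} = (\<lambda>j. p * j) ` {1..M div p}"
  proof (intro equalityI subsetI)
    fix k assume "k \<in> {k\<in>{1..M}. p dvd k}"
    then obtain j where "k = p * j" "1 \<le> j" "p * j \<le> M" by auto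
    then show "k \<in> (\<lambda>j. p * j) ` {1..M div p}"
      using assms by (auto simp: less_eq_div_iff_mult_less_eq mult.commute)
  next
    fix k assume "k \<in> (\<lambda>j. p * j) ` {1..M div p}"
    then show "k \<in> {k\<in>{1..M}. p dvd k}"
      using assms by (auto simp: less_eq_div_iff_mult_less_eq mult.commute)
  qed
  have "fact M = (\<Prod>k\<in>{k\<in>{1..M}. p dvd k}. k) * nondvd_prod p M"
    using prod.Int_Diff[of "{1..M}" "\<lambda>k. k" "{k. p dvd k}"]
    unfolding fact_prod nondvd_prod_def by (simp add: Int_def set_diff_eq conj_commute)
  also have "(\<Prod>k\<in>{k\<in>{1..M}. p dvd k}. k) = (\<Prod>j\<in>{1..M div p}. p * j)"
    unfolding multiples using assms by (subst prod.reindex) (auto simp: inj_on_def)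
  also have "\<dots> = p ^ (M div p) * fact (M div p)"
    by (simp add: prod.distrib fact_prod)
  finally show ?thesis .
qed

lemma coprime_nondvd_prod:
  fixes p M :: nat
  assumes "prime p"
  shows "coprime (nondvd_prod p M) p"
  unfolding nondvd_prod_def
  by (rule prod_coprime_left) (use assms in \<open>auto simp: coprime_commute dest: prime_imp_coprime\<close>)

lemma nondvd_prod_add:
  fixes p M q :: nat
  assumes "p dvd M"
  shows "nondvd_prod p (M + q) = nondvd_prod p M * (\<Prod>k\<in>{k\<in>{1..q}. \<not> p dvd k}. M + k)"
proof -
  have shifted: "{k\<in>{M<..M + q}. \<not> p dvd k} = (\<lambda>k. M + k) ` {k\<in>{1..q}. \<not> p dvd k}"
  proof (intro equalityI subsetI)
    fix k assume k: "k \<in> {k\<in>{M<..M + q}. \<not> p dvd k}"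
    then have "k - M \<in> {k\<in>{1..q}. \<not> p dvd k}"
      using assms by (auto dest: dvd_diffD)
    then show "k \<in> (\<lambda>k. M + k) ` {k\<in>{1..q}. \<not> p dvd k}"
      using k by (intro image_eqI[of _ _ "k - M"]) auto
  qed (use assms in \<open>auto simp: dvd_add_right_iff dest: dvd_diffD\<close>)
  have split: "{k\<in>{1..M + q}. \<not> p dvd k} = {k\<in>{1..M}. \<not> p dvd k} \<union> {k\<in>{M<..M + q}. \<not> p dvd k}"
    by auto
  have "nondvd_prod p (M + q) = nondvd_prod p M * (\<Prod>k\<in>{k\<in>{M<..M + q}. \<not> p dvd k}. k)"
    unfolding nondvd_prod_def split by (rule prod.union_disjoint) auto
  also have "(\<Prod>k\<in>{k\<in>{M<..M + q}. \<not> p dvd k}. k) = (\<Prod>k\<in>{k\<in>{1..q}. \<not> p dvd k}. M + k)"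
    unfolding shifted by (subst prod.reindex) (auto simp: inj_on_def)
  finally show ?thesis .
qed

lemma prod_nondvd_pair_up:
  fixes p q :: nat and f :: "nat \<Rightarrow> 'a :: comm_monoid_mult"
  assumes "odd q" "p dvd q"
  shows "(\<Prod>k\<in>{k\<in>{1..q}. \<not> p dvd k}. f k)
       = (\<Prod>k\<in>{k\<in>{1..q}. \<not> p dvd k \<and> 2 * k < q}. f k * f (q - k))"
proof -
  define L where "L = {k\<in>{1..q}. \<not> p dvd k \<and> 2 * k < q}"
  have reflected: "(\<lambda>k. q - k) ` L = {k\<in>{1..q}. \<not> p dvd k \<and> q < 2 * k}"
  proof (intro equalityI subsetI)
    fix k assume k: "k \<in> {k\<in>{1..q}. \<not> p dvd k \<and> q < 2 * k}"
    moreover have "k \<noteq> q"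
      using k assms(2) by auto
    ultimately have "q - k \<in> L"
      using assms by (auto simp: L_def dest: dvd_diffD1)
    then show "k \<in> (\<lambda>k. q - k) ` L"
      using k by (intro image_eqI[of _ _ "q - k"]) auto
  qed (use assms in \<open>auto simp: L_def dest: dvd_diffD1\<close>)
  have split: "{k\<in>{1..q}. \<not> p dvd k} = L \<union> (\<lambda>k. q - k) ` L"
    unfolding reflected using assms(1) by (auto simp: L_def) (metis dvd_triv_left nat_neq_iff)
  have "(\<Prod>k\<in>{k\<in>{1..q}. \<not> p dvd k}. f k) = (\<Prod>k\<in>L. f k) * (\<Prod>k\<in>(\<lambda>k. q - k) ` L. f k)"
    unfolding split by (rule prod.union_disjoint) (auto simp: reflected L_def)
  also have "(\<Prod>k\<in>(\<lambda>k. q - k) ` L. f k) = (\<Prod>k\<in>L. f (q - k))"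
    by (subst prod.reindex) (auto simp: inj_on_def L_def)
  finally show ?thesis
    by (simp add: prod.distrib L_def)
qed

lemma prod_nondvd_shift_cong:
  fixes p q x :: nat
  assumes "odd q" "p dvd q" "q dvd x"
  shows "[(\<Prod>k\<in>{k\<in>{1..q}. \<not> p dvd k}. x + k) = nondvd_prod p q] (mod q\<^sup>2)"
proof -
  obtain y where x: "x = q * y"
    using assms(3) ..
  have "[(x + k) * (x + (q - k)) = k * (q - k)] (mod q\<^sup>2)" if "k \<le> q" for k
  proof -
    obtain d where "q = k + d"
      using \<open>k \<le> q\<close> le_Suc_ex by blast
    then have "(x + k) * (x + (q - k)) = k * (q - k) + q\<^sup>2 * (y * (y + 1))"
      unfolding x by (simp add: algebra_simps power2_eq_square)
    then show ?thesis
      by (simp add: cong_def)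
  qed
  then have "[(\<Prod>k\<in>{k\<in>{1..q}. \<not> p dvd k \<and> 2 * k < q}. (x + k) * (x + (q - k)))
            = (\<Prod>k\<in>{k\<in>{1..q}. \<not> p dvd k \<and> 2 * k < q}. k * (q - k))] (mod q\<^sup>2)"
    by (intro cong_prod) auto
  then show ?thesis
    using prod_nondvd_pair_up[OF assms(1,2), of "\<lambda>k. x + k"] prod_nondvd_pair_up[OF assms(1,2), of "\<lambda>k. k"]
    by (simp add: nondvd_prod_def)
qed

lemma nondvd_prod_mult_cong:
  fixes p q c :: nat
  assumes "odd q" "p dvd q"
  shows "[nondvd_prod p (c * q) = nondvd_prod p q ^ c] (mod q\<^sup>2)"
proof (induction c)
  case 0
  show ?case
    by (simp add: nondvd_prod_def)
next
  case (Suc c)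
  have "nondvd_prod p (Suc c * q) = nondvd_prod p (c * q) * (\<Prod>k\<in>{k\<in>{1..q}. \<not> p dvd k}. c * q + k)"
    using nondvd_prod_add[of p "c * q" q] assms(2) by (simp add: add.commute)
  moreover have "[nondvd_prod p (c * q) * (\<Prod>k\<in>{k\<in>{1..q}. \<not> p dvd k}. c * q + k)
                 = nondvd_prod p q ^ c * nondvd_prod p q] (mod q\<^sup>2)"
    by (intro cong_mult Suc.IH prod_nondvd_shift_cong assms) simp
  ultimately show ?case
    by (simp add: mult.commute)
qed

lemma binomial_mult_nondvd_prod:
  fixes p x y :: nat
  assumes "p > 0"
  shows "((x + y) * p choose (x * p)) * nondvd_prod p (x * p) * nondvd_prod p (y * p)
       = ((x + y) choose x) * nondvd_prod p ((x + y) * p)"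
proof -
  have split: "fact (n * p) = p ^ n * fact n * nondvd_prod p (n * p)" for n
    using fact_eq_nondvd_prod[OF assms, of "n * p"] assms by simp
  have "(p ^ (x + y) * fact x * fact y) * (((x + y) * p choose (x * p)) * nondvd_prod p (x * p) * nondvd_prod p (y * p))
      = fact (x * p) * fact (y * p) * ((x + y) * p choose (x * p))"
    unfolding split by (simp add: power_add ac_simps)
  also have "\<dots> = fact ((x + y) * p)"
    using binomial_fact_lemma[of "x * p" "(x + y) * p"] by (simp add: add_mult_distrib)
  also have "\<dots> = p ^ (x + y) * (fact x * fact y * ((x + y) choose x)) * nondvd_prod p ((x + y) * p)"
    unfolding split using binomial_fact_lemma[of x "x + y"] by simp
  finally have "(p ^ (x + y) * fact x * fact y) * (((x + y) * p choose (x * p)) * nondvd_prod p (x * p) * nondvd_prod p (y * p))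
              = (p ^ (x + y) * fact x * fact y) * (((x + y) choose x) * nondvd_prod p ((x + y) * p))"
    by (simp add: ac_simps)
  then show ?thesis
    using assms by simp
qed

lemma binomial_triple_mult_nondvd_prod:
  fixes p a b :: nat
  assumes "p > 0"
  shows "((a + b) * p choose (a * p)) * (2 * a * p choose (a * p)) * (2 * b * p choose (b * p))
          * (nondvd_prod p (a * p) ^ 3 * nondvd_prod p (b * p) ^ 3)
       = ((a + b) choose a) * (2 * a choose a) * (2 * b choose b)
          * (nondvd_prod p ((a + b) * p) * nondvd_prod p (2 * a * p) * nondvd_prod p (2 * b * p))"
proof -
  note binomial_mult_nondvd_prod[OF assms]
  note ab = this[of a b] and aa = this[of a a, folded mult_2] and bb = this[of b b, folded mult_2]
  have "((a + b) * p choose (a * p)) * (2 * a * p choose (a * p)) * (2 * b * p choose (b * p))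
          * (nondvd_prod p (a * p) ^ 3 * nondvd_prod p (b * p) ^ 3)
      = (((a + b) * p choose (a * p)) * nondvd_prod p (a * p) * nondvd_prod p (b * p))
          * ((2 * a * p choose (a * p)) * nondvd_prod p (a * p) * nondvd_prod p (a * p))
          * ((2 * b * p choose (b * p)) * nondvd_prod p (b * p) * nondvd_prod p (b * p))"
    by (simp add: power3_eq_cube ac_simps)
  also have "\<dots> = (((a + b) choose a) * nondvd_prod p ((a + b) * p))
          * ((2 * a choose a) * nondvd_prod p (2 * a * p)) * ((2 * b choose b) * nondvd_prod p (2 * b * p))"
    by (simp only: ab aa bb)
  finally show ?thesis
    by (simp add: ac_simps)
qed

lemma nondvd_prod_triple_cong:
  fixes p a b t :: nat
  assumes "odd p" "p ^ t dvd a" "p ^ t dvd b"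
  shows "[nondvd_prod p (a * p) ^ 3 * nondvd_prod p (b * p) ^ 3
          = nondvd_prod p ((a + b) * p) * nondvd_prod p (2 * a * p) * nondvd_prod p (2 * b * p)]
         (mod p ^ (2 * (t + 1)))"
proof -
  define q where "q = p ^ (t + 1)"
  obtain a' b' where "a = p ^ t * a'" "b = p ^ t * b'"
    using assms(2,3) by (auto elim!: dvdE)
  then have blocks: "a * p = a' * q" "b * p = b' * q" "(a + b) * p = (a' + b') * q"
    "2 * a * p = (2 * a') * q" "2 * b * p = (2 * b') * q"
    by (simp_all add: q_def algebra_simps)
  define W where "W = nondvd_prod p q"
  have W: "[nondvd_prod p (c * q) = W ^ c] (mod q\<^sup>2)" for c
    unfolding W_def by (rule nondvd_prod_mult_cong) (use assms(1) in \<open>simp_all add: q_def\<close>)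
  have separate: "[nondvd_prod p (a * p) ^ 3 * nondvd_prod p (b * p) ^ 3 = (W ^ a') ^ 3 * (W ^ b') ^ 3] (mod q\<^sup>2)"
    unfolding blocks by (intro cong_mult cong_pow W)
  have merged: "[nondvd_prod p ((a + b) * p) * nondvd_prod p (2 * a * p) * nondvd_prod p (2 * b * p)
                 = W ^ (a' + b') * W ^ (2 * a') * W ^ (2 * b')] (mod q\<^sup>2)"
    unfolding blocks by (intro cong_mult W)
  have exponents: "(W ^ a') ^ 3 * (W ^ b') ^ 3 = W ^ (a' + b') * W ^ (2 * a') * W ^ (2 * b')"
    by (simp flip: power_mult power_add add: algebra_simps)
  have "[nondvd_prod p (a * p) ^ 3 * nondvd_prod p (b * p) ^ 3
          = nondvd_prod p ((a + b) * p) * nondvd_prod p (2 * a * p) * nondvd_prod p (2 * b * p)] (mod q\<^sup>2)"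
    using cong_trans[OF separate[unfolded exponents] cong_sym[OF merged]] .
  moreover have "q\<^sup>2 = p ^ (2 * (t + 1))"
    unfolding q_def power_mult[symmetric] by (simp add: mult.commute)
  ultimately show ?thesis
    by simp
qed

lemma cong_cancel_of_mult_eq:
  fixes P Q U V m n :: nat
  assumes "P * U = Q * V" "[U = V] (mod m)" "n dvd Q" "coprime U (n * m)"
  shows "[P = Q] (mod n * m)"
proof -
  obtain z where Q: "Q = n * z"
    using assms(3) ..
  have "[n * (z * V) = n * (z * U)] (mod n * m)"
    using assms(2) by (intro cong_cmult_leftI cong_scalar_left) (rule cong_sym)
  then have "[P * U = Q * U] (mod n * m)"
    unfolding assms(1) Q by (simp add: ac_simps)
  then show ?thesis
    using cong_mult_rcancel_nat[OF assms(4)] by blast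
qed

lemma multiplicity_fact_div:
  fixes p n :: nat
  assumes "prime p"
  shows "multiplicity p (fact n :: nat) = n div p + multiplicity p (fact (n div p) :: nat)"
proof -
  have "\<not> p dvd nondvd_prod p n"
    using coprime_nondvd_prod[OF assms, of n] assms
    by (auto dest: coprime_common_divisor_nat)
  then have "multiplicity p (nondvd_prod p n) = 0"
    by (rule not_dvd_imp_multiplicity_0)
  moreover have "nondvd_prod p n \<noteq> 0"
    by (simp add: nondvd_prod_def)
  ultimately show ?thesis
    using fact_eq_nondvd_prod[OF prime_gt_0_nat[OF assms], of n] assms
    by (simp add: prime_elem_multiplicity_mult_distrib)
qed

lemma multiplicity_fact:
  fixes p n K :: nat
  assumes "prime p" "n \<le> K"
  shows "multiplicity p (fact n :: nat) = (\<Sum>j\<in>{1..K}. n div p ^ j)"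
  using assms(2)
proof (induction n arbitrary: K rule: less_induct)
  case (less n)
  show ?case
  proof (cases "n = 0")
    case False
    then obtain K' where K: "K = Suc K'"
      using less.prems by (cases K) auto
    have "n div p < n"
      using False prime_gt_1_nat[OF assms(1)] by simp
    then have IH: "multiplicity p (fact (n div p) :: nat) = (\<Sum>j\<in>{1..K'}. n div p div p ^ j)"
      using less.prems K by (intro less.IH) auto
    have "(\<Sum>j\<in>{1..K}. n div p ^ j) = n div p + (\<Sum>j\<in>{Suc 1..Suc K'}. n div p ^ j)"
      unfolding K by (subst sum.atLeast_Suc_atMost) auto
    also have "(\<Sum>j\<in>{Suc 1..Suc K'}. n div p ^ j) = (\<Sum>j\<in>{1..K'}. n div p div p ^ j)"
      by (simp only: sum.shift_bounds_cl_Suc_ivl power_Suc div_mult2_eq)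
    finally show ?thesis
      using IH multiplicity_fact_div[OF assms(1), of n] by simp
  qed simp
qed

lemma multiplicity_central_binomial:
  fixes p a K :: nat
  assumes "prime p" "2 * a \<le> K"
  shows "multiplicity p (2 * a choose a) = (\<Sum>j\<in>{1..K}. 2 * (a mod p ^ j) div p ^ j)"
proof -
  have "fact a * fact a * (2 * a choose a) = (fact (2 * a) :: nat)"
    using binomial_fact_lemma[of a "2 * a"] by simp
  then have "multiplicity p (fact (2 * a) :: nat)
           = 2 * multiplicity p (fact a :: nat) + multiplicity p (2 * a choose a)"
    using assms(1) by (metis prime_elem_multiplicity_mult_distrib prime_imp_prime_elem fact_nonzero
        mult_2 mult_eq_0_iff)
  moreover have "2 * a div p ^ j = 2 * (a div p ^ j) + 2 * (a mod p ^ j) div p ^ j" for j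
  proof -
    have "2 * a = 2 * (a mod p ^ j) + 2 * (a div p ^ j) * p ^ j"
      by (metis add_mult_distrib2 mod_div_mult_eq mult.assoc)
    moreover have "p ^ j > 0"
      using assms(1) by (simp add: prime_gt_0_nat)
    ultimately show ?thesis
      by (metis div_mult_self1 add.commute less_not_refl2)
  qed
  ultimately show ?thesis
    using multiplicity_fact[OF assms(1) assms(2)] multiplicity_fact[OF assms(1), of a K] assms(2)
    by (simp add: sum.distrib sum_distrib_left)
qed

lemma carry_of_dvd_add:
  fixes a b d :: nat
  assumes "d dvd a + b" "\<not> d dvd a"
  shows "d \<le> 2 * (a mod d) \<or> d \<le> 2 * (b mod d)"
proof (cases "d = 0")
  case False
  have "d dvd a mod d + b mod d"
    using assms(1) by (simp add: dvd_eq_mod_eq_0 mod_add_eq)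
  then obtain k where k: "a mod d + b mod d = d * k" ..
  have "0 < a mod d" "a mod d < d" "b mod d < d"
    using assms(2) False by (auto simp: dvd_eq_mod_eq_0)
  with k have "k = 1"
    by (metis One_nat_def add_pos_nonneg add_strict_mono less_2_cases mult_2_right mult_less_cancel1
        mult_0_right zero_le less_nat_zero_code)
  with k have "a mod d + b mod d = d"
    by simp
  then show ?thesis
    by linarith
qed simp

lemma prime_power_dvd_central_binomial_prod:
  fixes p a b t e :: nat
  assumes "prime p" "p ^ (t + e) dvd a + b" "\<not> p ^ (t + 1) dvd a"
  shows "p ^ e dvd (2 * a choose a) * (2 * b choose b)"
proof -
  define K where "K = 2 * (a + b) + t + e"
  \<comment> \<open>carry c j is 1 iff adding c to itself in base p carries into digit j\<close>
  define carry where "carry c j = 2 * (c mod p ^ j) div p ^ j" for c j :: nat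
  have multiplicity: "multiplicity p ((2 * a choose a) * (2 * b choose b)) = (\<Sum>j\<in>{1..K}. carry a j + carry b j)"
    using multiplicity_central_binomial[OF assms(1), of a K] multiplicity_central_binomial[OF assms(1), of b K]
      assms(1)
    by (simp add: K_def carry_def sum.distrib prime_elem_multiplicity_mult_distrib)
  have carries: "1 \<le> carry a j + carry b j" if "j \<in> {t + 1..t + e}" for j
  proof -
    have "p ^ j dvd a + b"
      using that assms(2) by (meson atLeastAtMost_iff dvd_trans le_imp_power_dvd)
    moreover have "\<not> p ^ j dvd a"
      using that assms(3) by (meson atLeastAtMost_iff dvd_trans le_imp_power_dvd)
    ultimately have "p ^ j \<le> 2 * (a mod p ^ j) \<or> p ^ j \<le> 2 * (b mod p ^ j)"
      by (rule carry_of_dvd_add)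
    then have "0 < carry a j \<or> 0 < carry b j"
      using assms(1) by (auto simp: carry_def div_greater_zero_iff prime_gt_0_nat)
    then show ?thesis
      by linarith
  qed
  have "e \<le> (\<Sum>j\<in>{t + 1..t + e}. carry a j + carry b j)"
    using sum_mono[of "{t + 1..t + e}" "\<lambda>_. 1::nat"] carries by simp
  also have "\<dots> \<le> (\<Sum>j\<in>{1..K}. carry a j + carry b j)"
    by (rule sum_mono2) (auto simp: K_def)
  finally show ?thesis
    unfolding multiplicity[symmetric] by (rule multiplicity_dvd')
qed

lemma prime_power_dvd_binomial:
  fixes p n k t e :: nat
  assumes "prime p" "p ^ (t + e) dvd n" "0 < k" "\<not> p ^ (t + 1) dvd k"
  shows "p ^ e dvd n choose k"
proof (cases "k \<le> n")
  case True
  then have nonzero: "n choose k \<noteq> 0"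
    by simp
  have "k * (n choose k) = n * ((n - 1) choose (k - 1))"
    using binomial_absorption[of "k - 1" n] assms(3) by simp
  then have "p ^ (t + e) dvd k * (n choose k)"
    using assms(2) by simp
  then have "t + e \<le> multiplicity p (k * (n choose k))"
    using nonzero assms(1,3) by (subst (asm) power_dvd_iff_le_multiplicity) auto
  also have "\<dots> = multiplicity p k + multiplicity p (n choose k)"
    using nonzero assms(1,3) by (simp add: prime_elem_multiplicity_mult_distrib)
  finally have "t + e \<le> multiplicity p k + multiplicity p (n choose k)" .
  moreover have "multiplicity p k \<le> t"
    using assms(4) multiplicity_dvd'[of "t + 1" p k] by linarith
  ultimately show ?thesis
    by (intro multiplicity_dvd') linarith
qed (simp add: binomial_eq_0)

lemma binomial_triple_cong:
  fixes p a b n :: nat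
  assumes "prime p" "odd p" "p ^ n dvd a + b"
  shows "[((a + b) * p choose (a * p)) * (2 * a * p choose (a * p)) * (2 * b * p choose (b * p))
          = ((a + b) choose a) * (2 * a choose a) * (2 * b choose b)] (mod p ^ (2 * (n + 1)))"
proof -
  let ?Q = "((a + b) choose a) * (2 * a choose a) * (2 * b choose b)"
  \<comment> \<open>t is the p-adic valuation of a, capped at n\<close>
  obtain t where t: "t \<le> n" "p ^ t dvd a" "p ^ (2 * (n - t)) dvd ?Q"
  proof (cases "p ^ n dvd a")
    case True
    then show ?thesis
      using that[of n] by simp
  next
    case False
    define t where "t = multiplicity p a"
    have "a \<noteq> 0"
      using False by (metis dvd_0_right)
    have t_dvd: "p ^ t dvd a"
      by (simp add: t_def multiplicity_dvd)
    have t_max: "\<not> p ^ (t + 1) dvd a"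
      using \<open>a \<noteq> 0\<close> prime_gt_1_nat[OF assms(1)] power_dvd_iff_le_multiplicity[of a p "t + 1"]
      by (simp add: t_def)
    have "t < n"
      using False multiplicity_dvd'[of n p a] unfolding t_def by (meson not_less)
    then have exponent: "p ^ (t + (n - t)) dvd a + b"
      using assms(3) by simp
    have "p ^ (n - t) dvd (a + b) choose a"
      using prime_power_dvd_binomial[OF assms(1) exponent] \<open>a \<noteq> 0\<close> t_max by simp
    moreover have "p ^ (n - t) dvd (2 * a choose a) * (2 * b choose b)"
      using prime_power_dvd_central_binomial_prod[OF assms(1) exponent t_max] .
    ultimately have "p ^ (2 * (n - t)) dvd ?Q"
      unfolding mult.assoc mult_2 power_add by (rule mult_dvd_mono)
    then show ?thesis
      using that[of t] \<open>t < n\<close> t_dvd by simp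
  qed
  have "p ^ t dvd b"
    using t(1,2) assms(3) by (metis dvd_add_right_iff dvd_trans le_imp_power_dvd)
  have "2 * (n + 1) = 2 * (n - t) + 2 * (t + 1)"
    using t(1) by simp
  then have modulus: "p ^ (2 * (n + 1)) = p ^ (2 * (n - t)) * p ^ (2 * (t + 1))"
    by (metis power_add)
  note identity = binomial_triple_mult_nondvd_prod[OF prime_gt_0_nat[OF assms(1)], of a b]
  have "[nondvd_prod p (a * p) ^ 3 * nondvd_prod p (b * p) ^ 3
          = nondvd_prod p ((a + b) * p) * nondvd_prod p (2 * a * p) * nondvd_prod p (2 * b * p)]
         (mod p ^ (2 * (t + 1)))"
    using assms(2) t(2) \<open>p ^ t dvd b\<close> by (rule nondvd_prod_triple_cong)
  moreover have "coprime (nondvd_prod p (a * p) ^ 3 * nondvd_prod p (b * p) ^ 3)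
                   (p ^ (2 * (n - t)) * p ^ (2 * (t + 1)))"
    using coprime_nondvd_prod[OF assms(1)] by simp
  ultimately show ?thesis
    unfolding modulus using identity t(3) by (intro cong_cancel_of_mult_eq)
qed

theorem lemma2p14:
  fixes p r m s :: nat
  assumes "prime p" and "odd p" and "r \<ge> 1" and "m \<ge> 1"
    and "s < m * p ^ (r - 1)"
  shows "[(m * p ^ r choose (s * p)) * (2 * s * p choose (s * p))
            * (2 * m * p ^ r - 2 * s * p choose (m * p ^ r - s * p))
          = (m * p ^ (r - 1) choose s) * (2 * s choose s)
            * (2 * m * p ^ (r - 1) - 2 * s choose (m * p ^ (r - 1) - s))] (mod p ^ (2 * r))"
proof -
  define b where "b = m * p ^ (r - 1) - s"
  have sum: "m * p ^ (r - 1) = s + b"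
    using assms(5) by (simp add: b_def)
  have "p ^ (r - 1) dvd s + b"
    by (simp flip: sum)
  moreover have "r - 1 + 1 = r"
    using assms(3) by simp
  ultimately have "[((s + b) * p choose (s * p)) * (2 * s * p choose (s * p)) * (2 * b * p choose (b * p))
          = ((s + b) choose s) * (2 * s choose s) * (2 * b choose b)] (mod p ^ (2 * r))"
    using binomial_triple_cong[OF assms(1,2)] by metis
  moreover have top: "m * p ^ r = (s + b) * p"
    using assms(3) by (simp flip: sum power_minus_mult add: mult.assoc)
  then have "2 * m * p ^ r - 2 * s * p = 2 * b * p" "(s + b) * p - s * p = b * p"
    by (simp_all add: algebra_simps)
  moreover have "2 * m * p ^ (r - 1) - 2 * s = 2 * b"
    using sum by simp
  ultimately show ?thesis
    unfolding top sum by simp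
qed

end
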